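(* Fix $q\in[0,1)$, $N\in\mathbb N$, $k\in\llbracket0,N\rrbracket$, and let $X$ be an integer that is sufficiently large (depending on $N$ and $k$). Let $\dot\zeta_0$ and $\ddot\zeta_0$ be random bijections of $\llbracket -X,X\rrbracket$ defined as follows. $\dot\zeta_0$ is the identity on $\llbracket k+1,X\rrbracket$ and its restriction to $\llbracket -X,k\rrbracket$ has the Mallows law $\mathcal M_{-X,k}$. $\ddot\zeta_0$ is obtained by first taking a random bijection $u$ of $\llbracket -X,X\rrbracket$ which is the identity on $\llbracket -X,-X+k-1\rrbracket$ and whose restriction to $\llbracket -X+k,X\rrbracket$ has law $\mathcal M_{-X+k,X}$, and then letting $\ddot\zeta_0$ have the law of the $s\to\infty$ limit of the multi-species dynamics on the sites $\llbracket -X,k\rrbracket$ started from $u$ (values at sites in $\llbracket k+1,X\rrbracket$ unchanged). Couple $\dot\zeta_0,\ddot\zeta_0$ so that $\mathbb 1[\dot\zeta_0(x)\le -X+k-1]=\mathbb 1[\ddot\zeta_0(x)\le -X+k-1]$ for all $x$ almost surely (these two configurations have the same law), independently of the Poisson processes. Let $\dot{\boldsymbol\zeta},\ddot{\boldsymbol\zeta}$ be the multi-species ASEPs on $\llbracket -X,X\rrbracket$ started from $\dot\zeta_0,\ddot\zeta_0$, and $\boldsymbol\xi$ the biased card shuffling of size $N$ started from the identity of $[N]$, all under the basic coupling. Let $\dot\zeta^i_t(x)=\mathbb 1[\dot\zeta_t(x)\le i]$, $\ddot\zeta^i_t(x)=\mathbb 1[\ddot\zeta_t(x)\le i]$, $\xi^k_t(x)=\mathbb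 1[\xi_t(x)\le k]$. Then almost surely for every $t\ge0$, \[ h\{\ddot\zeta^{-1+k-N}_t\}\le h\{\xi^k_t\}\quad\text{and}\quad h\{\ddot\zeta^{-1+k-N}_t\}\le h\{\ddot\zeta^{-X+k-1}_t\}=h\{\dot\zeta^{-X+k-1}_t\}\le h'\{\dot\zeta^k_t\}. \]
   Context: $\llbracket x,y\rrbracket$ is the set of integers in $[x,y]$, $[N]=\llbracket1,N\rrbracket$. For integers $m\le n$, $\mathcal M_{m,n}$ is the Mallows measure on bijections $w$ of $\llbracket m,n\rrbracket$: $\mathcal M_{m,n}(w)\propto q^{\#\{m\le i<j\le n:\,w(i)<w(j)\}}$. Multi-species dynamics on a finite interval $D$ (state: an injective labelling of the sites of $D$ by integers): each nearest-neighbour pair $x,x+1\in D$ swaps its values at rate $1$ if the value at $x$ is smaller and at rate $q$ otherwise; on $[N]$ started from a bijection this is the biased card shuffling, on $\llbracket-X,X\rrbracket$ the multi-species ASEP there. Basic coupling: independent Poisson point processes $\Pi_1,\Pi_q$ on $\mathbb Z\times[0,\infty)$ of intensities $1,q$; at $(x,s)\in\Pi_1$ with $x,x+1$ in the domain, swap values at $x,x+1$ if the value at $x$ is smaller just before $s$; at $(x,s)\in\Pi_q$, swap if it is larger; all processes use the same $\Pi_1,\Pi_q$. Height functions: for $\omega:\llbracket m,n\rrbracket\to\{0,1\}$, $h\{\omega\}:\mathbb Z\to\mathbb Z$ is defined by extending $\omega$ by $0$ on $x<m$ and $1$ on $x>n$, setting $h\{\omega\}(x)=x$ for $x<m$, and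 $h\{\omega\}(x)-h\{\omega\}(x-1)=1-2\omega(x)$; $h'\{\omega\}$ is defined the same way but extending $\omega$ by $1$ on all of $\mathbb Z\setminus\llbracket m,n\rrbracket$ (so $h'\{\omega\}(x)=-x$ for $x<m$). For functions, $f\le g$ means pointwise. *)

theory Defs
  imports "HOL-Probability.Probability" "HOL-Combinatorics.Permutations"
begin

text \<open>Bijections of [m,n] are represented as permutations of {m..n} (identity outside).
  Number of non-inversions: pairs m <= i < j <= n with w i < w j.\<close>

definition noninv :: "int \<Rightarrow> int \<Rightarrow> (int \<Rightarrow> int) \<Rightarrow> nat" where
  "noninv m n w = card {(i, j). m \<le> i \<and> i < j \<and> j \<le> n \<and> w i < w j}"

definition mallows_Z :: "real \<Rightarrow> int \<Rightarrow> int \<Rightarrow> real" where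
  "mallows_Z q m n = (\<Sum>w\<in>{w. w permutes {m..n}}. q ^ noninv m n w)"

definition mallows :: "real \<Rightarrow> int \<Rightarrow> int \<Rightarrow> (int \<Rightarrow> int) pmf" where
  "mallows q m n = embed_pmf (\<lambda>w. if w permutes {m..n} then q ^ noninv m n w / mallows_Z q m n else 0)"

text \<open>The points of the
  rate-1 Poisson process at site x are the partial sums of E(x,True,_); the points of the
  rate-q Poisson process at site x are the partial sums of E(x,False,_) divided by q
  (empty if q = 0). This is the standard construction of independent Poisson processes
  of intensities 1 and q on Z x [0,infinity).\<close>

definition clock_space :: "(int \<times> bool \<times> nat \<Rightarrow> real) measure" where
  "clock_space = PiM UNIV (\<lambda>_. density lborel (exponential_density 1))"

definition Pi1 :: "(int \<times> bool \<times> nat \<Rightarrow> real) \<Rightarrow> int \<Rightarrow> real set" where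
  "Pi1 E x = range (\<lambda>n. \<Sum>j\<le>n. E (x, True, j))"

definition Piq :: "real \<Rightarrow> (int \<times> bool \<times> nat \<Rightarrow> real) \<Rightarrow> int \<Rightarrow> real set" where
  "Piq q E x = (if q > 0 then range (\<lambda>n. (\<Sum>j\<le>n. E (x, False, j)) / q) else {})"

text \<open>An event (s,x,c): c = True is a point of Pi_1, c = False a point of Pi_q.\<close>

definition swap_step :: "real \<times> int \<times> bool \<Rightarrow> (int \<Rightarrow> int) \<Rightarrow> (int \<Rightarrow> int)" where
  "swap_step e \<eta> = (case e of (s, x, c) \<Rightarrow>
     if (c \<and> \<eta> x < \<eta> (x + 1)) \<or> (\<not> c \<and> \<eta> (x + 1) < \<eta> x)
     then \<eta>(x := \<eta> (x + 1), x + 1 := \<eta> x) else \<eta>)"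

definition event_times :: "real \<Rightarrow> (int \<times> bool \<times> nat \<Rightarrow> real) \<Rightarrow> int \<Rightarrow> int \<Rightarrow> real \<Rightarrow> real set" where
  "event_times q E a b t = {s. 0 < s \<and> s \<le> t \<and> (\<exists>x. a \<le> x \<and> x + 1 \<le> b \<and> (s \<in> Pi1 E x \<or> s \<in> Piq q E x))}"

text \<open>All events at a given time s (a.s. there is at most one), ordered by site then kind.\<close>

definition events_at :: "real \<Rightarrow> (int \<times> bool \<times> nat \<Rightarrow> real) \<Rightarrow> int \<Rightarrow> int \<Rightarrow> real \<Rightarrow> (real \<times> int \<times> bool) list" where
  "events_at q E a b s = concat (map (\<lambda>x.
      (if s \<in> Pi1 E x then [(s, x, True)] else []) @ (if s \<in> Piq q E x then [(s, x, False)] else []))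
      [a..b - 1])"

definition dyn :: "real \<Rightarrow> (int \<times> bool \<times> nat \<Rightarrow> real) \<Rightarrow> int \<Rightarrow> int \<Rightarrow> (int \<Rightarrow> int) \<Rightarrow> real \<Rightarrow> (int \<Rightarrow> int)" where
  "dyn q E a b \<eta> t = fold swap_step (concat (map (events_at q E a b) (sorted_list_of_set (event_times q E a b t)))) \<eta>"

definition hgt :: "int \<Rightarrow> int \<Rightarrow> (int \<Rightarrow> bool) \<Rightarrow> int \<Rightarrow> int" where
  "hgt m n \<omega> x = (if x < m then x else
     (m - 1) + (\<Sum>y\<in>{m..x}. 1 - 2 * (if y > n then 1 else if \<omega> y then 1 else 0)))"

definition hgt' :: "int \<Rightarrow> int \<Rightarrow> (int \<Rightarrow> bool) \<Rightarrow> int \<Rightarrow> int" where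
  "hgt' m n \<omega> x = (if x < m then - x else
     - (m - 1) + (\<Sum>y\<in>{m..x}. 1 - 2 * (if y > n then 1 else if \<omega> y then 1 else 0)))"

end

(* All four comparisons hold pathwise for the basic coupling. The probabilistic input is only
   that almost surely the clocks ring finitely often in bounded time windows, and that the
   initial configurations are bijections; the second one is of the form u o pi with u fixing
   [-X, -X+k-1] and pi a permutation of [-X,k], since it is reached from a Mallows sample by
   the dynamics on [-X,k].

   A swap at (x, x+1) changes the height function h of a threshold projection only at x,
   where it becomes min (h (x-1)) (h (x+1)) + 1 for a rate-1 clock and
   max (h (x-1)) (h (x+1)) - 1 for a rate-q clock. This update is monotone, and a height
   function on [a',b'] never lies below its own update at sites outside [a',b'-1], so the
   order between a height function on [a,b] and one on a subinterval [a',b'] persists.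
   This gives the first inequality, which at time 0 is a counting argument. Threshold
   projections evolve autonomously, which gives the equality; the other two inequalities
   are monotonicity in the threshold and the fact that exactly X+1 values lie in
   [-X+k, k]. *)

theory Submission
  imports Defs
begin

section \<open>Support of the Mallows measure\<close>

definition reflect :: "int \<Rightarrow> int \<Rightarrow> int \<Rightarrow> int" where
  "reflect m n x = (if m \<le> x \<and> x \<le> n then m + n - x else x)"

lemma reflect_permutes: "reflect m n permutes {m..n}"
proof -
  have "reflect m n (reflect m n x) = x" for x by (auto simp: reflect_def)
  then show ?thesis unfolding permutes_def by (metis reflect_def atLeastAtMost_iff)
qed

lemma noninv_reflect: "noninv m n (reflect m n) = 0"
proof -
  have "{(i, j). m \<le> i \<and> i < j \<and> j \<le> n \<and> reflect m n i < reflect m n j} = {}"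
    by (auto simp: reflect_def)
  then show ?thesis unfolding noninv_def by (simp only: card.empty)
qed

(* The reflection of [m,n] has no non-inversions, so it contributes q ^ 0 = 1 even when q = 0. *)
lemma mallows_Z_ge_1:
  assumes "0 \<le> q" shows "1 \<le> mallows_Z q m n"
proof -
  have "q ^ noninv m n (reflect m n) \<le> mallows_Z q m n"
    unfolding mallows_Z_def
    by (rule member_le_sum) (use reflect_permutes finite_permutations assms in auto)
  then show ?thesis by (simp add: noninv_reflect)
qed

lemma set_pmf_mallows:
  assumes "0 \<le> q" and "w \<in> set_pmf (mallows q m n)"
  shows "w permutes {m..n}"
proof -
  define f where "f v = (if v permutes {m..n} then q ^ noninv m n v / mallows_Z q m n else 0)" for v
  have Z: "1 \<le> mallows_Z q m n" using mallows_Z_ge_1 assms(1) .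
  have fin: "finite {w. w permutes {m..n}}" by (simp add: finite_permutations)
  have nonneg: "0 \<le> f v" for v using Z assms(1) by (simp add: f_def)
  have "(\<integral>\<^sup>+w. ennreal (f w) \<partial>count_space UNIV) = ennreal (\<Sum>w\<in>{w. w permutes {m..n}}. f w)"
    using fin nonneg by (subst nn_integral_count_space') (auto simp: f_def intro: sum_ennreal)
  also have "(\<Sum>w\<in>{w. w permutes {m..n}}. f w) = 1"
    using Z by (simp add: f_def mallows_Z_def flip: sum_divide_distrib)
  finally have "set_pmf (mallows q m n) = {w. f w \<noteq> 0}"
    unfolding mallows_def f_def[abs_def] by (intro set_embed_pmf) (use nonneg in \<open>auto simp: f_def\<close>)
  with assms(2) show ?thesis by (auto simp: f_def split: if_splits)
qed

section \<open>Height functions\<close>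

lemma hgt_eq_sum: "hgt m n \<omega> x = x - 2 * (\<Sum>y\<in>{m..x}. of_bool (n < y \<or> \<omega> y))"
proof (cases "x < m")
  case False
  have "(\<Sum>y\<in>{m..x}. 1 - 2 * (if n < y then 1 else if \<omega> y then 1 else 0)) =
      (\<Sum>y\<in>{m..x}. 1 - 2 * of_bool (n < y \<or> \<omega> y) :: int)"
    by (intro sum.cong) auto
  also have "\<dots> = (\<Sum>y\<in>{m..x}. 1) - 2 * (\<Sum>y\<in>{m..x}. of_bool (n < y \<or> \<omega> y))"
    by (simp only: sum_subtractf sum_distrib_left)
  finally show ?thesis using False by (simp add: hgt_def)
qed (simp add: hgt_def)

lemma hgt'_eq_hgt: "hgt' m n \<omega> x = (if x < m then - x else hgt m n \<omega> x - 2 * (m - 1))"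
  by (simp add: hgt'_def hgt_def)

lemma hgt_below: "x < m \<Longrightarrow> hgt m n \<omega> x = x"
  by (simp add: hgt_def)

lemma hgt_le: "hgt m n \<omega> x \<le> x"
  by (simp add: hgt_eq_sum sum_nonneg)

lemma hgt_step: "hgt m n \<omega> x = hgt m n \<omega> (x - 1) + (if m \<le> x \<and> (n < x \<or> \<omega> x) then -1 else 1)"
proof (cases "x < m")
  case False
  then have "{m..x} = insert x {m..x - 1}" by auto
  then show ?thesis using False by (simp add: hgt_eq_sum)
qed (simp add: hgt_below)

lemma hgt_lipschitz: "\<bar>hgt m n \<omega> x - hgt m n \<omega> y\<bar> \<le> \<bar>x - y\<bar>"
proof -
  have "\<bar>hgt m n \<omega> x - hgt m n \<omega> y\<bar> \<le> x - y" if "y \<le> x" for x y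
    using that
  proof (induction x rule: int_ge_induct)
    case (step x)
    then show ?case using hgt_step[of m n \<omega> "x + 1"] by (simp add: abs_le_iff split: if_split_asm)
  qed simp
  from this[of x y] this[of y x] show ?thesis by (cases "y \<le> x") auto
qed

lemma hgt_descend:
  assumes "x \<le> x'" and "\<And>y. x < y \<Longrightarrow> y \<le> x' \<Longrightarrow> m \<le> y \<and> (n < y \<or> \<omega> y)"
  shows "hgt m n \<omega> x' = hgt m n \<omega> x - (x' - x)"
  using assms
proof (induction x' rule: int_ge_induct)
  case (step x')
  then have "m \<le> x' + 1 \<and> (n < x' + 1 \<or> \<omega> (x' + 1))" by force
  then show ?case using step hgt_step[of m n \<omega> "x' + 1"] by simp
qed simp

lemma hgt_ascend:
  assumes "x \<le> x'" and "\<And>y. x < y \<Longrightarrow> y \<le> x' \<Longrightarrow> \<not> (m \<le> y \<and> (n < y \<or> \<omega> y))"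
  shows "hgt m n \<omega> x' = hgt m n \<omega> x + (x' - x)"
  using assms
proof (induction x' rule: int_ge_induct)
  case (step x')
  then have "\<not> (m \<le> x' + 1 \<and> (n < x' + 1 \<or> \<omega> (x' + 1)))" by force
  then show ?case using step hgt_step[of m n \<omega> "x' + 1"] by simp
qed simp

lemma hgt_cong:
  assumes "\<And>y. m \<le> y \<Longrightarrow> y \<le> n \<Longrightarrow> y \<le> x \<Longrightarrow> \<omega> y = \<omega>' y"
  shows "hgt m n \<omega> x = hgt m n \<omega>' x"
  unfolding hgt_eq_sum using assms by (auto intro!: sum.cong)

lemma hgt_antimono:
  assumes "\<And>y. \<omega>' y \<Longrightarrow> \<omega> y"
  shows "hgt m n \<omega> x \<le> hgt m n \<omega>' x"
  unfolding hgt_eq_sum using assms by (auto intro!: sum_mono)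

lemma hgt_le_hgt_add_card:
  assumes "\<And>y. \<omega> y \<Longrightarrow> \<omega>' y"
  shows "hgt m n \<omega> x \<le> hgt m n \<omega>' x + 2 * int (card {y\<in>{m..n}. \<omega>' y \<and> \<not> \<omega> y})"
proof -
  define S where "S = {y\<in>{m..n}. \<omega>' y \<and> \<not> \<omega> y}"
  have fin: "finite S" unfolding S_def by (rule finite_subset[of _ "{m..n}"]) auto
  have "(\<Sum>y\<in>{m..x}. of_bool (n < y \<or> \<omega>' y)) \<le>
      (\<Sum>y\<in>{m..x}. of_bool (n < y \<or> \<omega> y) + of_bool (y \<in> S) :: int)"
    by (rule sum_mono) (use assms in \<open>auto simp: S_def\<close>)
  also have "\<dots> = (\<Sum>y\<in>{m..x}. of_bool (n < y \<or> \<omega> y)) + int (card ({m..x} \<inter> S))"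
    by (simp add: sum.distrib)
  also have "\<dots> \<le> (\<Sum>y\<in>{m..x}. of_bool (n < y \<or> \<omega> y)) + int (card S)"
    using fin by (simp add: card_mono)
  finally show ?thesis by (simp add: hgt_eq_sum S_def)
qed

lemma hgt_eq_card: "x \<le> n \<Longrightarrow> hgt m n \<omega> x = x - 2 * int (card {y\<in>{m..x}. \<omega> y})"
  by (simp add: hgt_eq_sum Int_def conj_commute)

section \<open>Single swaps\<close>

lemma swap_step_eq_comp: "\<exists>\<tau>. \<tau> permutes {x, x + 1} \<and> swap_step (s, x, c) \<eta> = \<eta> \<circ> \<tau>"
proof (cases "(c \<and> \<eta> x < \<eta> (x + 1)) \<or> (\<not> c \<and> \<eta> (x + 1) < \<eta> x)")
  case True
  then have "swap_step (s, x, c) \<eta> = \<eta> \<circ> Transposition.transpose x (x + 1)"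
    by (auto simp: swap_step_def Transposition.transpose_def)
  then show ?thesis using permutes_swap_id[of x "{x, x + 1}" "x + 1"] by blast
next
  case False
  then have "swap_step (s, x, c) \<eta> = \<eta> \<circ> id" by (auto simp: swap_step_def)
  then show ?thesis using permutes_id by blast
qed

(* Whenever the decision to swap is not determined by the projection, both values lie on the
   same side of i and the projection does not change. *)
lemma swap_step_threshold:
  fixes \<eta> :: "int \<Rightarrow> int" and i :: int
  shows "swap_step (s, x, c) \<eta> y \<le> i \<longleftrightarrow>
    (if (c \<and> \<eta> x \<le> i \<and> \<not> \<eta> (x + 1) \<le> i) \<or> (\<not> c \<and> \<not> \<eta> x \<le> i \<and> \<eta> (x + 1) \<le> i)
     then (if y = x then \<eta> (x + 1) \<le> i else if y = x + 1 then \<eta> x \<le> i else \<eta> y \<le> i) else \<eta> y \<le> i)"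
  unfolding swap_step_def by (cases "y = x"; cases "y = x + 1"; cases c) auto

lemma swap_step_threshold_cong:
  fixes \<eta> \<eta>' :: "int \<Rightarrow> int"
  assumes "a \<le> x" "x + 1 \<le> b" and "\<forall>y\<in>{a..b}. \<eta> y \<le> i \<longleftrightarrow> \<eta>' y \<le> i"
  shows "\<forall>y\<in>{a..b}. swap_step (s, x, c) \<eta> y \<le> i \<longleftrightarrow> swap_step (s, x, c) \<eta>' y \<le> i"
proof -
  have "\<eta> x \<le> i \<longleftrightarrow> \<eta>' x \<le> i" "\<eta> (x + 1) \<le> i \<longleftrightarrow> \<eta>' (x + 1) \<le> i"
    using assms by auto
  then show ?thesis unfolding swap_step_threshold using assms(3) by simp
qed

definition swap_height :: "bool \<Rightarrow> int \<Rightarrow> int \<Rightarrow> int" where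
  "swap_height c l r = (if c then min l r + 1 else max l r - 1)"

lemma hgt_swap_step:
  fixes \<eta> :: "int \<Rightarrow> int" and i :: int
  assumes "m \<le> x" "x + 1 \<le> n"
  defines "h \<equiv> hgt m n (\<lambda>y. \<eta> y \<le> i)"
  shows "hgt m n (\<lambda>y. swap_step (s, x, c) \<eta> y \<le> i) = h(x := swap_height c (h (x - 1)) (h (x + 1)))"
proof
  let ?\<omega> = "\<lambda>y. \<eta> y \<le> i" and ?\<omega>' = "\<lambda>y. swap_step (s, x, c) \<eta> y \<le> i"
  obtain \<tau> where \<tau>: "\<tau> permutes {x, x + 1}" and swap: "swap_step (s, x, c) \<eta> = \<eta> \<circ> \<tau>"
    using swap_step_eq_comp by blast
  have below: "hgt m n ?\<omega>' y = h y" if "y < x" for y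
    unfolding h_def by (rule hgt_cong) (use that \<tau> in \<open>auto simp: swap permutes_not_in\<close>)
  have above: "hgt m n ?\<omega>' y = h y" if "x < y" for y
  proof -
    have \<tau>y: "\<tau> permutes {m..y}" by (rule permutes_subset[OF \<tau>]) (use that assms in auto)
    have "n < \<tau> z \<longleftrightarrow> n < z" for z
    proof (cases "z \<in> {x, x + 1}")
      case True
      then have "\<tau> z \<in> {x, x + 1}" using permutes_in_image[OF \<tau>] by blast
      with True assms show ?thesis by auto
    qed (simp add: permutes_not_in[OF \<tau>])
    then have "(\<Sum>z\<in>{m..y}. of_bool (n < z \<or> ?\<omega> z)) = (\<Sum>z\<in>{m..y}. of_bool (n < z \<or> ?\<omega>' z) :: int)"
      by (subst sum.permute[OF \<tau>y]) (simp add: swap)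
    then show ?thesis by (simp add: h_def hgt_eq_sum)
  qed
  have at: "hgt m n ?\<omega>' x = swap_height c (h (x - 1)) (h (x + 1))"
    using hgt_step[of m n ?\<omega>' x] below[of "x - 1"] hgt_step[of m n ?\<omega> "x + 1"] hgt_step[of m n ?\<omega> x] assms
    by (cases c) (auto simp: h_def swap_height_def swap_step_def)
  fix y
  show "hgt m n ?\<omega>' y = (h(x := swap_height c (h (x - 1)) (h (x + 1)))) y"
    using below above at by (cases y x rule: linorder_cases) auto
qed

lemma swap_height_mono: "l \<le> l' \<Longrightarrow> r \<le> r' \<Longrightarrow> swap_height c l r \<le> swap_height c l' r'"
  by (auto simp: swap_height_def)

(* The dynamics on [m,n] ignores clocks at x < m or x >= n. At such x the update could only
   lower the height, so an upper bound survives ignoring them. *)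
lemma swap_height_le_hgt_outside:
  assumes "x < m \<or> n \<le> x"
  shows "swap_height c (hgt m n \<omega> (x - 1)) (hgt m n \<omega> (x + 1)) \<le> hgt m n \<omega> x"
proof -
  have "hgt m n \<omega> (x - 1) < hgt m n \<omega> x \<or> hgt m n \<omega> (x + 1) < hgt m n \<omega> x"
    using assms hgt_step[of m n \<omega> x] hgt_step[of m n \<omega> "x + 1"] by (auto simp: hgt_below)
  moreover have "hgt m n \<omega> (x - 1) \<le> hgt m n \<omega> x + 1" "hgt m n \<omega> (x + 1) \<le> hgt m n \<omega> x + 1"
    using hgt_lipschitz[of m n \<omega> x "x - 1"] hgt_lipschitz[of m n \<omega> "x + 1" x] by auto
  ultimately show ?thesis by (auto simp: swap_height_def)
qed

section \<open>The dynamics on an interval\<close>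

lemma sorted_list_of_set_filter:
  assumes "finite A"
  shows "sorted_list_of_set {x\<in>A. P x} = filter P (sorted_list_of_set A)"
  by (rule sorted_distinct_set_unique) (use assms in \<open>auto intro: sorted_wrt_filter\<close>)

lemma filter_upto:
  assumes "a \<le> a'" "b' \<le> b"
  shows "filter (\<lambda>x. a' \<le> x \<and> x \<le> b') [a..b] = [a'..b']"
proof -
  have "{x\<in>{a..b}. a' \<le> x \<and> x \<le> b'} = {a'..b'}" using assms by auto
  then show ?thesis using sorted_list_of_set_filter[of "{a..b}" "\<lambda>x. a' \<le> x \<and> x \<le> b'"] by simp
qed

lemma concat_map_filter: "concat (map f (filter P xs)) = concat (map (\<lambda>x. if P x then f x else []) xs)"
  by (induction xs) auto

fun event_within :: "int \<Rightarrow> int \<Rightarrow> real \<times> int \<times> bool \<Rightarrow> bool" where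
  "event_within a b (s, x, c) \<longleftrightarrow> a \<le> x \<and> x + 1 \<le> b"

lemma events_at_subinterval:
  assumes "a \<le> a'" "b' \<le> b"
  shows "events_at q E a' b' s = filter (event_within a' b') (events_at q E a b s)"
proof -
  define f where "f x = (if s \<in> Pi1 E x then [(s, x, True)] else []) @ (if s \<in> Piq q E x then [(s, x, False)] else [])" for x
  have "filter (event_within a' b') (f x) = (if a' \<le> x \<and> x \<le> b' - 1 then f x else [])" for x
    by (auto simp: f_def)
  then have "filter (event_within a' b') (events_at q E a b s) = concat (map f (filter (\<lambda>x. a' \<le> x \<and> x \<le> b' - 1) [a..b - 1]))"
    by (simp add: events_at_def f_def[symmetric] filter_concat comp_def concat_map_filter)
  also have "filter (\<lambda>x. a' \<le> x \<and> x \<le> b' - 1) [a..b - 1] = [a'..b' - 1]"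
    using assms by (intro filter_upto) auto
  finally show ?thesis by (simp add: events_at_def f_def)
qed

definition event_list :: "real \<Rightarrow> (int \<times> bool \<times> nat \<Rightarrow> real) \<Rightarrow> int \<Rightarrow> int \<Rightarrow> real \<Rightarrow> (real \<times> int \<times> bool) list" where
  "event_list q E a b t = concat (map (events_at q E a b) (sorted_list_of_set (event_times q E a b t)))"

lemma dyn_eq_fold: "dyn q E a b \<eta> t = fold swap_step (event_list q E a b t) \<eta>"
  by (simp add: dyn_def event_list_def)

lemma event_within_event_list: "e \<in> set (event_list q E a b t) \<Longrightarrow> event_within a b e"
  by (auto simp: event_list_def events_at_def split: if_splits)

lemma event_list_subinterval:
  assumes "a \<le> a'" "b' \<le> b" and fin: "finite (event_times q E a b t)"
  shows "event_list q E a' b' t = filter (event_within a' b') (event_list q E a b t)"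
proof -
  let ?T = "event_times q E a b t" and ?T' = "event_times q E a' b' t"
  have sub: "?T' \<subseteq> ?T"
  proof
    fix s assume "s \<in> ?T'"
    then obtain x where "0 < s" "s \<le> t" "a' \<le> x" "x + 1 \<le> b'" "s \<in> Pi1 E x \<or> s \<in> Piq q E x"
      unfolding event_times_def by blast
    then show "s \<in> ?T" unfolding event_times_def using assms(1,2) by (intro CollectI conjI exI[of _ x]) auto
  qed
  have none: "events_at q E a' b' s = []" if "s \<in> ?T" "s \<notin> ?T'" for s
    using that by (auto simp: events_at_def event_times_def)
  have "sorted_list_of_set ?T' = filter (\<lambda>s. s \<in> ?T') (sorted_list_of_set ?T)"
    using sorted_list_of_set_filter[OF fin, of "\<lambda>s. s \<in> ?T'"] sub by (simp add: Int_absorb1 Collect_conj_eq)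
  then have "event_list q E a' b' t = concat (map (events_at q E a' b') (sorted_list_of_set ?T))"
    using fin none by (auto simp: event_list_def concat_map_filter intro!: arg_cong[where f = concat])
  also have "\<dots> = filter (event_within a' b') (event_list q E a b t)"
    by (simp add: event_list_def filter_concat comp_def flip: events_at_subinterval[OF assms(1,2)])
  finally show ?thesis .
qed

lemma dyn_eq_comp_permutes: "\<exists>\<pi>. \<pi> permutes {a..b} \<and> dyn q E a b \<eta> t = \<eta> \<circ> \<pi>"
proof -
  have "\<exists>\<pi>. \<pi> permutes {a..b} \<and> fold swap_step L \<eta> = \<eta> \<circ> \<pi>"
    if "\<forall>e\<in>set L. event_within a b e" for L and \<eta> :: "int \<Rightarrow> int"
    using that
  proof (induction L arbitrary: \<eta>)
    case Nil
    show ?case by (metis comp_id fold_simps(1) permutes_id)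
  next
    case (Cons e L)
    obtain s x c where e: "e = (s, x, c)" by (cases e)
    obtain \<tau> where \<tau>: "\<tau> permutes {x, x + 1}" and swap: "swap_step e \<eta> = \<eta> \<circ> \<tau>"
      using swap_step_eq_comp e by blast
    have \<tau>': "\<tau> permutes {a..b}" by (rule permutes_subset[OF \<tau>]) (use Cons.prems e in auto)
    have "\<forall>e\<in>set L. event_within a b e" using Cons.prems by simp
    then obtain \<pi> where \<pi>: "\<pi> permutes {a..b}" and fold: "fold swap_step L (swap_step e \<eta>) = swap_step e \<eta> \<circ> \<pi>"
      using Cons.IH by blast
    have "fold swap_step (e # L) \<eta> = \<eta> \<circ> (\<tau> \<circ> \<pi>)" using fold swap by (simp add: comp_assoc)
    then show ?case using permutes_compose[OF \<pi> \<tau>'] by blast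
  qed
  then show ?thesis using event_within_event_list by (simp add: dyn_eq_fold)
qed

lemma dyn_threshold_cong:
  fixes \<eta> \<eta>' :: "int \<Rightarrow> int"
  assumes "\<forall>y\<in>{a..b}. \<eta> y \<le> i \<longleftrightarrow> \<eta>' y \<le> i"
  shows "\<forall>y\<in>{a..b}. dyn q E a b \<eta> t y \<le> i \<longleftrightarrow> dyn q E a b \<eta>' t y \<le> i"
proof -
  have "\<forall>y\<in>{a..b}. fold swap_step L \<eta> y \<le> i \<longleftrightarrow> fold swap_step L \<eta>' y \<le> i"
    if "\<forall>e\<in>set L. event_within a b e" "\<forall>y\<in>{a..b}. \<eta> y \<le> i \<longleftrightarrow> \<eta>' y \<le> i" for L and \<eta> \<eta>' :: "int \<Rightarrow> int"
    using that
  proof (induction L arbitrary: \<eta> \<eta>')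
    case (Cons e L)
    obtain s x c where e: "e = (s, x, c)" by (cases e)
    have "\<forall>y\<in>{a..b}. swap_step e \<eta> y \<le> i \<longleftrightarrow> swap_step e \<eta>' y \<le> i"
      unfolding e by (rule swap_step_threshold_cong) (use Cons.prems e in auto)
    then show ?case using Cons by simp
  qed simp
  then show ?thesis using assms event_within_event_list by (simp add: dyn_eq_fold)
qed

lemma hgt_fold_swap_step_mono:
  assumes "\<forall>e\<in>set L. event_within a b e"
    and "\<And>x. hgt a b (\<lambda>y. \<eta> y \<le> i) x \<le> hgt a' b' (\<lambda>y. \<theta> y \<le> j) x"
  shows "hgt a b (\<lambda>y. fold swap_step L \<eta> y \<le> i) x
    \<le> hgt a' b' (\<lambda>y. fold swap_step (filter (event_within a' b') L) \<theta> y \<le> j) x"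
  using assms
proof (induction L arbitrary: \<eta> \<theta> x)
  case (Cons e L)
  obtain s z c where e: "e = (s, z, c)" by (cases e)
  let ?h = "hgt a b (\<lambda>y. \<eta> y \<le> i)" and ?g = "hgt a' b' (\<lambda>y. \<theta> y \<le> j)"
  have h': "hgt a b (\<lambda>y. swap_step e \<eta> y \<le> i) = ?h(z := swap_height c (?h (z - 1)) (?h (z + 1)))"
    unfolding e by (rule hgt_swap_step) (use Cons.prems(1) e in auto)
  have sw: "swap_height c (?h (z - 1)) (?h (z + 1)) \<le> swap_height c (?g (z - 1)) (?g (z + 1))"
    using Cons.prems(2) by (intro swap_height_mono)
  show ?case
  proof (cases "event_within a' b' e")
    case True
    have "hgt a' b' (\<lambda>y. swap_step e \<theta> y \<le> j) = ?g(z := swap_height c (?g (z - 1)) (?g (z + 1)))"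
      unfolding e by (rule hgt_swap_step) (use True e in auto)
    then have "hgt a b (\<lambda>y. swap_step e \<eta> y \<le> i) y \<le> hgt a' b' (\<lambda>y. swap_step e \<theta> y \<le> j) y" for y
      using h' sw Cons.prems(2) by simp
    with Cons.IH[of "swap_step e \<eta>" "swap_step e \<theta>"] Cons.prems(1) True show ?thesis by simp
  next
    case False
    then have "swap_height c (?g (z - 1)) (?g (z + 1)) \<le> ?g z"
      using e by (intro swap_height_le_hgt_outside) auto
    then have "hgt a b (\<lambda>y. swap_step e \<eta> y \<le> i) y \<le> ?g y" for y
      using h' sw Cons.prems(2) by simp
    with Cons.IH[of "swap_step e \<eta>" \<theta>] Cons.prems(1) False show ?thesis by simp
  qed
qed simp

theorem hgt_dyn_mono:
  assumes "a \<le> a'" "b' \<le> b" "finite (event_times q E a b t)"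
    and "\<And>x. hgt a b (\<lambda>y. \<eta> y \<le> i) x \<le> hgt a' b' (\<lambda>y. \<theta> y \<le> j) x"
  shows "hgt a b (\<lambda>y. dyn q E a b \<eta> t y \<le> i) x \<le> hgt a' b' (\<lambda>y. dyn q E a' b' \<theta> t y \<le> j) x"
  unfolding dyn_eq_fold event_list_subinterval[OF assms(1-3)]
  by (rule hgt_fold_swap_step_mono) (use assms(4) event_within_event_list in auto)

section \<open>Comparison of the initial and final profiles\<close>

lemma card_permutes_preimage:
  assumes "\<sigma> permutes S" "T \<subseteq> S"
  shows "card {y\<in>S. \<sigma> y \<in> T} = card T"
proof -
  have "\<sigma> ` {y\<in>S. \<sigma> y \<in> T} = T"
    using assms permutes_image[OF assms(1)] by auto
  moreover have "inj_on \<sigma> {y\<in>S. \<sigma> y \<in> T}"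
    using permutes_inj[OF assms(1)] by (auto intro: inj_on_subset)
  ultimately show ?thesis by (metis card_image)
qed

lemma hgt_id_threshold:
  assumes "0 \<le> k" "k \<le> N"
  shows "hgt 1 N (\<lambda>y. id y \<le> k) x =
    (if x \<le> 0 then x else if x \<le> k then - x else if x \<le> N then x - 2 * k else 2 * N - 2 * k - x)"
proof -
  let ?g = "hgt 1 N (\<lambda>y. id y \<le> k)"
  have g0: "?g 0 = 0" by (simp add: hgt_below)
  have g1: "?g x = - x" if "0 \<le> x" "x \<le> k" for x
    using hgt_descend[of 0 x] g0 that by auto
  have g2: "?g x = x - 2 * k" if "k \<le> x" "x \<le> N" for x
    using hgt_ascend[of k x] g1[of k] that assms by auto
  have g3: "?g x = 2 * N - 2 * k - x" if "N \<le> x" for x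
    using hgt_descend[of N x] g2[of N] that assms by auto
  show ?thesis using hgt_below[of x 1] g1 g2 g3 by auto
qed

(* Since u fixes [-X, -X+k-1], at least k of the values <= -1+k-N sit in [-X,k]; this bounds
   h(k), counting all such values gives h(X), and the rest is the Lipschitz property. *)
lemma hgt_initial_le_hgt_id:
  fixes u \<pi> :: "int \<Rightarrow> int"
  assumes "0 \<le> k" "k \<le> N" "N \<le> X"
    and u: "u permutes {-X + k..X}" and \<pi>: "\<pi> permutes {-X..k}"
  shows "hgt (-X) X (\<lambda>y. (u \<circ> \<pi>) y \<le> -1 + k - N) x \<le> hgt 1 N (\<lambda>y. id y \<le> k) x"
proof -
  let ?\<omega> = "\<lambda>y. (u \<circ> \<pi>) y \<le> -1 + k - N"
  let ?h = "hgt (-X) X ?\<omega>"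
  have u\<pi>: "u \<circ> \<pi> permutes {-X..X}"
    using permutes_subset[OF u, of "{-X..X}"] permutes_subset[OF \<pi>, of "{-X..X}"] assms
    by (auto intro: permutes_compose)
  have "card {y\<in>{-X..k}. \<pi> y \<in> {-X..-X + k - 1}} \<le> card {y\<in>{-X..k}. ?\<omega> y}"
    using assms permutes_not_in[OF u] by (intro card_mono) (auto intro: finite_subset[of _ "{-X..k}"])
  then have "k \<le> card {y\<in>{-X..k}. ?\<omega> y}"
    using card_permutes_preimage[OF \<pi>, of "{-X..-X + k - 1}"] assms by simp
  then have hk: "?h k \<le> - k"
    using assms by (simp add: hgt_eq_card)
  have "{y\<in>{-X..X}. ?\<omega> y} = {y\<in>{-X..X}. (u \<circ> \<pi>) y \<in> {-X..-1 + k - N}}"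
    using permutes_in_image[OF u\<pi>] by auto
  then have "card {y\<in>{-X..X}. ?\<omega> y} = X + k - N"
    using card_permutes_preimage[OF u\<pi>, of "{-X..-1 + k - N}"] assms by simp
  then have hX: "?h X = 2 * N - 2 * k - X"
    using assms by (simp add: hgt_eq_card)
  have "?h x \<le> - k + \<bar>x - k\<bar>"
    using hgt_lipschitz[of "-X" X ?\<omega> x k] hk by linarith
  moreover have "?h x \<le> 2 * N - 2 * k - x"
  proof (cases "x \<le> X")
    case True
    then show ?thesis using hgt_lipschitz[of "-X" X ?\<omega> x X] hX by linarith
  next
    case False
    then show ?thesis using hgt_descend[of X x "-X" X ?\<omega>] hX assms by auto
  qed
  ultimately show ?thesis
    using hgt_le[of "-X" X ?\<omega> x] unfolding hgt_id_threshold[OF assms(1,2)] by auto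
qed

lemma hgt_le_hgt'_threshold:
  fixes z :: "int \<Rightarrow> int"
  assumes "0 \<le> k" "k \<le> X" and z: "z permutes {-X..X}"
  shows "hgt (-X) X (\<lambda>y. z y \<le> -X + k - 1) x \<le> hgt' (-X) X (\<lambda>y. z y \<le> k) x"
proof (cases "x < -X")
  case False
  have "{y\<in>{-X..X}. z y \<le> k \<and> \<not> z y \<le> -X + k - 1} = {y\<in>{-X..X}. z y \<in> {-X + k..k}}"
    by auto
  then have "card {y\<in>{-X..X}. z y \<le> k \<and> \<not> z y \<le> -X + k - 1} = X + 1"
    using card_permutes_preimage[OF z, of "{-X + k..k}"] assms by simp
  then show ?thesis
    using hgt_le_hgt_add_card[of "\<lambda>y. z y \<le> -X + k - 1" "\<lambda>y. z y \<le> k" "-X" X x] False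
    by (simp add: hgt'_eq_hgt)
qed (use assms in \<open>simp add: hgt_below hgt'_eq_hgt\<close>)

section \<open>Poisson clocks\<close>

lemma finite_partial_sums_le:
  fixes f :: "nat \<Rightarrow> real"
  assumes nonneg: "\<And>j. 0 \<le> f j" and frequently: "\<And>n. \<exists>j\<ge>n. 1 \<le> f j"
  shows "finite {n. (\<Sum>j\<le>n. f j) \<le> T}"
proof -
  have "\<exists>n0. T < (\<Sum>j\<le>n0. f j)"
  proof (rule ccontr)
    assume "\<nexists>n0. T < (\<Sum>j\<le>n0. f j)"
    then have "summable f" using nonneg by (intro bounded_imp_summable[where B = T]) (auto simp: not_less)
    then have "f \<longlonglongrightarrow> 0" by (rule summable_LIMSEQ_zero)
    then obtain n where "\<forall>j\<ge>n. f j < 1"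
      using order_tendstoD(2)[of f 0 sequentially 1] by (auto simp: eventually_sequentially)
    with frequently[of n] show False by force
  qed
  then obtain n0 where n0: "T < (\<Sum>j\<le>n0. f j)" by blast
  have mono: "(\<Sum>j\<le>n0. f j) \<le> (\<Sum>j\<le>n. f j)" if "n0 \<le> n" for n
    using that nonneg by (intro sum_mono2) auto
  have "{n. (\<Sum>j\<le>n. f j) \<le> T} \<subseteq> {..<n0}"
  proof
    fix n assume "n \<in> {n. (\<Sum>j\<le>n. f j) \<le> T}"
    then show "n \<in> {..<n0}" using mono[of n] n0 by (cases "n0 \<le> n") auto
  qed
  then show ?thesis by (rule finite_subset) simp
qed

lemma finite_event_times:
  assumes nonneg: "\<And>i. 0 \<le> E i" and frequently: "\<And>x c n. \<exists>j\<ge>n. 1 \<le> E (x, c, j)"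
  shows "finite (event_times q E a b t)"
proof -
  have fin: "finite {n. (\<Sum>j\<le>n. E (x, c, j)) \<le> T}" for x c T
    using nonneg frequently by (intro finite_partial_sums_le)
  have "finite (Pi1 E x \<inter> {..t})" for x
  proof -
    have "Pi1 E x \<inter> {..t} \<subseteq> (\<lambda>n. \<Sum>j\<le>n. E (x, True, j)) ` {n. (\<Sum>j\<le>n. E (x, True, j)) \<le> t}"
      by (auto simp: Pi1_def)
    then show ?thesis using fin finite_subset by blast
  qed
  moreover have "finite (Piq q E x \<inter> {..t})" for x
  proof (cases "q > 0")
    case True
    have "Piq q E x \<inter> {..t} \<subseteq> (\<lambda>n. (\<Sum>j\<le>n. E (x, False, j)) / q) ` {n. (\<Sum>j\<le>n. E (x, False, j)) \<le> t * q}"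
      using True by (auto simp: Piq_def pos_divide_le_eq)
    then show ?thesis using fin finite_subset by blast
  qed (simp add: Piq_def)
  moreover have "event_times q E a b t \<subseteq> (\<Union>x\<in>{a..b}. (Pi1 E x \<inter> {..t}) \<union> (Piq q E x \<inter> {..t}))"
    unfolding event_times_def by force
  ultimately show ?thesis by (meson finite_UN_I finite_Un finite_atLeastAtMost_int finite_subset)
qed

lemma prob_space_exponential_1: "prob_space (density lborel (exponential_density 1))"
  by (rule prob_space_exponential_density) simp

lemma prob_space_clock_space: "prob_space clock_space"
  unfolding clock_space_def by (rule prob_space_PiM) (rule prob_space_exponential_1)

lemma emeasure_exponential_1_less_1:
  "emeasure (density lborel (exponential_density 1)) {..<1} \<le> ennreal (1 - exp (- 1))"
proof -
  let ?M = "density lborel (exponential_density 1)"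
  interpret prob_space ?M by (rule prob_space_exponential_1)
  have "distributed ?M lborel (\<lambda>x. x) (exponential_density 1)"
    by (auto simp: distributed_def distr_id2)
  then have "measure ?M {x \<in> space ?M. x \<le> 1} = 1 - exp (- 1)"
    using exponential_distributedD_le[of "\<lambda>x. x" 1 1] by simp
  moreover have "emeasure ?M {..<1} \<le> emeasure ?M {x \<in> space ?M. x \<le> 1}"
    by (rule emeasure_mono) auto
  ultimately show ?thesis by (simp add: emeasure_eq_measure)
qed

lemma AE_clock_space_nonneg: "AE E in clock_space. 0 \<le> E i"
proof -
  have "AE x in density lborel (exponential_density 1). 0 \<le> x"
    by (subst AE_density) (auto simp: exponential_density_def)
  then show ?thesis
    unfolding clock_space_def by (intro AE_PiM_component prob_space_exponential_1) auto
qed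

lemma AE_clock_space_frequently_ge_1: "AE E in clock_space. \<exists>j\<ge>n. 1 \<le> E (x, c, j)"
proof -
  let ?M = "density lborel (exponential_density 1)"
  define r :: real where "r = 1 - exp (- 1)"
  have r: "0 \<le> r" "r < 1" unfolding r_def by auto
  define B where "B = {E \<in> space clock_space. \<forall>j\<ge>n. E (x, c, j) < 1}"
  have B: "B \<in> sets clock_space"
    unfolding B_def clock_space_def by measurable
  have "emeasure clock_space B \<le> ennreal (r ^ Suc m)" for m
  proof -
    define J where "J = (\<lambda>j. (x, c, j)) ` {n..n + m}"
    have J: "finite J" "card J = Suc m"
      unfolding J_def by (auto simp: card_image inj_on_def)
    have "B \<subseteq> prod_emb UNIV (\<lambda>_. ?M) J (Pi\<^sub>E J (\<lambda>_. {..<1}))"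
      unfolding B_def clock_space_def J_def by (auto simp: prod_emb_def space_PiM PiE_iff)
    then have "emeasure clock_space B \<le> emeasure clock_space (prod_emb UNIV (\<lambda>_. ?M) J (Pi\<^sub>E J (\<lambda>_. {..<1})))"
      by (intro emeasure_mono) (auto simp: clock_space_def intro!: sets_PiM_I_countable)
    also have "\<dots> = emeasure ?M {..<1} ^ Suc m"
      unfolding clock_space_def using J by (subst emeasure_PiM_emb) (auto intro: prob_space_exponential_1)
    also have "\<dots> \<le> ennreal r ^ Suc m"
      by (rule power_mono) (use emeasure_exponential_1_less_1 in \<open>auto simp: r_def\<close>)
    also have "\<dots> = ennreal (r ^ Suc m)" by (rule ennreal_power[OF r(1)])
    finally show ?thesis .
  qed
  moreover have "(\<lambda>m. ennreal (r ^ Suc m)) \<longlonglongrightarrow> ennreal 0"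
    using r by (intro tendsto_ennrealI LIMSEQ_Suc LIMSEQ_realpow_zero)
  ultimately have "emeasure clock_space B \<le> 0"
    using LIMSEQ_le_const by (metis ennreal_0)
  then have "B \<in> null_sets clock_space" using B by auto
  moreover have "{E \<in> space clock_space. \<not> (\<exists>j\<ge>n. 1 \<le> E (x, c, j))} \<subseteq> B"
    unfolding B_def by (auto simp: not_le[symmetric])
  ultimately show ?thesis by (rule AE_I')
qed

lemma AE_finite_event_times: "AE E in clock_space. \<forall>a b t. finite (event_times q E a b t)"
proof -
  have "AE E in clock_space. \<forall>i. 0 \<le> E i"
    using AE_clock_space_nonneg by (simp add: AE_all_countable)
  moreover have "AE E in clock_space. \<forall>x c n. \<exists>j\<ge>n. 1 \<le> E (x, c, j)"
    using AE_clock_space_frequently_ge_1 by (simp add: AE_all_countable)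
  ultimately show ?thesis by eventually_elim (intro allI finite_event_times; blast)
qed

lemma AE_pair_pmf_measureI:
  assumes "prob_space M" and "AE y in M. Q y"
    and "\<And>x y. x \<in> set_pmf p \<Longrightarrow> Q y \<Longrightarrow> P (x, y)"
  shows "AE \<omega> in measure_pmf p \<Otimes>\<^sub>M M. P \<omega>"
proof -
  interpret M: prob_space M by (rule assms(1))
  obtain B where B: "B \<in> null_sets M" "{y \<in> space M. \<not> Q y} \<subseteq> B"
    using assms(2) by (auto elim!: AE_E)
  have "UNIV - set_pmf p \<in> null_sets (measure_pmf p)"
    using AE_measure_pmf[of p] by (subst AE_iff_null_sets) auto
  then have "(UNIV - set_pmf p) \<times> space M \<union> UNIV \<times> B \<in> null_sets (measure_pmf p \<Otimes>\<^sub>M M)"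
    using B by (intro null_sets.Un M.times_in_null_sets1 M.times_in_null_sets2) auto
  moreover have "{\<omega> \<in> space (measure_pmf p \<Otimes>\<^sub>M M). \<not> P \<omega>} \<subseteq> (UNIV - set_pmf p) \<times> space M \<union> UNIV \<times> B"
    using assms(3) B by (auto simp: space_pair_measure)
  ultimately show ?thesis by (rule AE_I')
qed

lemma ex_in_set_pmf_of_tendsto_pos:
  fixes f :: "'a \<Rightarrow> 'b \<Rightarrow> real \<Rightarrow> 'c"
  assumes "prob_space M"
    and lim: "((\<lambda>s. measure (measure_pmf p \<Otimes>\<^sub>M M) {(x, y). f x y s = w}) \<longlongrightarrow> l) at_top" and "0 < l"
  shows "\<exists>x\<in>set_pmf p. \<exists>y s. f x y s = w"
proof -
  obtain s where pos: "0 < measure (measure_pmf p \<Otimes>\<^sub>M M) {(x, y). f x y s = w}"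
    using eventually_happens'[OF trivial_limit_at_top_linorder order_tendstoD(1)[OF lim \<open>0 < l\<close>]] by blast
  show ?thesis
  proof (rule ccontr)
    let ?S = "{(x, y). f x y s = w}"
    assume "\<not> ?thesis"
    then have "AE \<omega> in measure_pmf p \<Otimes>\<^sub>M M. \<omega> \<notin> ?S"
      by (intro AE_pair_pmf_measureI[OF assms(1), of "\<lambda>_. True"]) auto
    then have "measure (measure_pmf p \<Otimes>\<^sub>M M) ?S = 0"
    proof (cases "?S \<in> sets (measure_pmf p \<Otimes>\<^sub>M M)")
      case True
      with \<open>AE \<omega> in measure_pmf p \<Otimes>\<^sub>M M. \<omega> \<notin> ?S\<close> have "?S \<in> null_sets (measure_pmf p \<Otimes>\<^sub>M M)"
        using AE_iff_null_sets by blast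
      then show ?thesis by (simp add: measure_def null_setsD1)
    qed (simp add: measure_notin_sets)
    with pos show False by simp
  qed
qed

lemma dyn_limit_support:
  assumes "0 \<le> q" and "0 < l"
    and "((\<lambda>s. measure (measure_pmf (mallows q m n) \<Otimes>\<^sub>M clock_space) {(u, E). dyn q E a b u s = w})
      \<longlongrightarrow> l) at_top"
  shows "\<exists>u \<pi>. u permutes {m..n} \<and> \<pi> permutes {a..b} \<and> w = u \<circ> \<pi>"
proof -
  obtain u E s where "u \<in> set_pmf (mallows q m n)" and "dyn q E a b u s = w"
    using ex_in_set_pmf_of_tendsto_pos[OF prob_space_clock_space assms(3,2)] by blast
  then show ?thesis using set_pmf_mallows[OF assms(1)] dyn_eq_comp_permutes by metis
qed

theorem lemma3p1:
  fixes N k :: int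
  assumes "1 \<le> N" and "0 \<le> k" and "k \<le> N"
  shows "\<exists>X0. \<forall>X \<ge> X0. \<forall>(q::real) (C :: ((int \<Rightarrow> int) \<times> (int \<Rightarrow> int)) pmf).
    0 \<le> q \<longrightarrow> q < 1 \<longrightarrow>
    map_pmf fst C = mallows q (-X) k \<longrightarrow>
    (\<forall>w. ((\<lambda>s. measure (measure_pmf (mallows q (-X + k) X) \<Otimes>\<^sub>M clock_space)
              {(u, E). dyn q E (-X) k u s = w})
           \<longlongrightarrow> pmf (map_pmf snd C) w) at_top) \<longrightarrow>
    (\<forall>(z1, z2) \<in> set_pmf C. \<forall>x\<in>{-X..X}. (z1 x \<le> -X + k - 1) = (z2 x \<le> -X + k - 1)) \<longrightarrow>
    (AE \<omega> in measure_pmf C \<Otimes>\<^sub>M clock_space.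
      (case \<omega> of ((z1, z2), E) \<Rightarrow> \<forall>t\<ge>0.
        (\<forall>x. hgt (-X) X (\<lambda>y. dyn q E (-X) X z2 t y \<le> -1 + k - N) x
               \<le> hgt 1 N (\<lambda>y. dyn q E 1 N id t y \<le> k) x) \<and>
        (\<forall>x. hgt (-X) X (\<lambda>y. dyn q E (-X) X z2 t y \<le> -1 + k - N) x
               \<le> hgt (-X) X (\<lambda>y. dyn q E (-X) X z2 t y \<le> -X + k - 1) x) \<and>
        (\<forall>x. hgt (-X) X (\<lambda>y. dyn q E (-X) X z2 t y \<le> -X + k - 1) x
               = hgt (-X) X (\<lambda>y. dyn q E (-X) X z1 t y \<le> -X + k - 1) x) \<and>
        (\<forall>x. hgt (-X) X (\<lambda>y. dyn q E (-X) X z1 t y \<le> -X + k - 1) x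
               \<le> hgt' (-X) X (\<lambda>y. dyn q E (-X) X z1 t y \<le> k) x)))"
proof (intro exI[of _ N] allI impI, goal_cases)
  case hyps: (1 X q C)
  show ?case
  proof (rule AE_pair_pmf_measureI[OF prob_space_clock_space AE_finite_event_times[of q]], goal_cases)
    case (1 z E)
    obtain z1 z2 where z: "z = (z1, z2)" by fastforce
    have "z1 \<in> set_pmf (mallows q (-X) k)"
      using 1 z hyps(4) set_map_pmf[of fst C] by force
    then have "z1 permutes {-X..X}"
      using set_pmf_mallows hyps permutes_subset[of z1 "{-X..k}" "{-X..X}"] assms by force
    then have z1_t: "dyn q E (-X) X z1 t permutes {-X..X}" for t
      using dyn_eq_comp_permutes[of "-X" X q E z1 t] by (auto intro: permutes_compose)
    have "0 < pmf (map_pmf snd C) z2"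
      using 1 z by (intro pmf_positive) (force simp: set_map_pmf)
    then obtain u \<pi> where "u permutes {-X + k..X}" "\<pi> permutes {-X..k}" "z2 = u \<circ> \<pi>"
      using dyn_limit_support[OF hyps(2) _ hyps(5)[rule_format]] by blast
    then have init: "hgt (-X) X (\<lambda>y. z2 y \<le> -1 + k - N) x \<le> hgt 1 N (\<lambda>y. id y \<le> k) x" for x
      using hgt_initial_le_hgt_id assms hyps(1) by blast
    have coupled: "hgt (-X) X (\<lambda>y. dyn q E (-X) X z2 t y \<le> -1 + k - N) x
        \<le> hgt 1 N (\<lambda>y. dyn q E 1 N id t y \<le> k) x" for t x
      using 1 assms hyps(1) by (intro hgt_dyn_mono init) auto
    have agree: "\<forall>y\<in>{-X..X}. dyn q E (-X) X z2 t y \<le> -X + k - 1 \<longleftrightarrow> dyn q E (-X) X z1 t y \<le> -X + k - 1" for t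
      using hyps(6) 1 z by (intro dyn_threshold_cong) auto
    show ?case
      unfolding z prod.case
      using coupled hgt_le_hgt'_threshold[OF _ _ z1_t] agree 1 assms hyps(1)
      by (auto intro!: hgt_antimono hgt_cong)
  qed
qed

end
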